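(* Let $s$ be a Sturmian word of type $a$ having a factorization $s=U_1U_2\cdots U_n\cdots$ where each $U_i$ ($i\ge1$) is a non-empty prefix of $s$ and $r_s(U_i)=r_s(U_j)$ for all $i,j\ge1$. Then at least one of the following holds: (i) every $U_i$, $i\ge1$, ends in the letter $a$; (ii) for every $i\ge1$, $U_ia$ is a prefix of $s$.
   Context: A Sturmian word is an infinite word $s\in\{a,b\}^{\omega}$ that is aperiodic (not ultimately periodic) and balanced: for all factors $u,v$ of $s$ with $|u|=|v|$ one has $||u|_x-|v|_x|\le 1$ for $x\in\{a,b\}$, where $|u|_x$ is the number of occurrences of $x$ in $u$. A Sturmian word contains exactly one of the factors $aa$, $bb$; it is of type $a$ if it does not contain the factor $bb$ (and of type $b$ if it does not contain $aa$). A non-empty factor $w$ of $s$ is rich in the letter $z\in\{a,b\}$ if there is a factor $v$ of $s$ with $|v|=|w|$ and $|w|_z>|v|_z$; every non-empty factor of a Sturmian word is rich in exactly one letter, and $r_s(w)\in\{a,b\}$ denotes that letter. *)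

theory Defs
  imports Main
begin

datatype letter = a | b

type_synonym word = "nat \<Rightarrow> letter"

definition factor :: "letter list \<Rightarrow> word \<Rightarrow> bool" where
  "factor w s \<longleftrightarrow> (\<exists>i. w = map s [i..<i + length w])"

definition prefix_of :: "letter list \<Rightarrow> word \<Rightarrow> bool" where
  "prefix_of w s \<longleftrightarrow> w = map s [0..<length w]"

definition cnt :: "letter list \<Rightarrow> letter \<Rightarrow> nat" where
  "cnt w x = length (filter (\<lambda>y. y = x) w)"

definition ultimately_periodic :: "word \<Rightarrow> bool" where
  "ultimately_periodic s \<longleftrightarrow> (\<exists>p>0. \<exists>N. \<forall>n\<ge>N. s (n + p) = s n)"

definition balanced :: "word \<Rightarrow> bool" where
  "balanced s \<longleftrightarrow> (\<forall>u v x. factor u s \<longrightarrow> factor v s \<longrightarrow> length u = length v \<longrightarrow>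
      \<bar>int (cnt u x) - int (cnt v x)\<bar> \<le> 1)"

definition sturmian :: "word \<Rightarrow> bool" where
  "sturmian s \<longleftrightarrow> \<not> ultimately_periodic s \<and> balanced s"

definition type_a :: "word \<Rightarrow> bool" where
  "type_a s \<longleftrightarrow> \<not> factor [b, b] s"

definition rich_in :: "word \<Rightarrow> letter list \<Rightarrow> letter \<Rightarrow> bool" where
  "rich_in s w z \<longleftrightarrow> w \<noteq> [] \<and> factor w s \<and>
     (\<exists>v. factor v s \<and> length v = length w \<and> cnt w z > cnt v z)"

definition rich_letter :: "word \<Rightarrow> letter list \<Rightarrow> letter" where
  "rich_letter s w = (THE z. rich_in s w z)"

text \<open>s = U 0 U 1 U 2 ... (infinite concatenation of finite words, indexed from 0).\<close>
definition factorization :: "word \<Rightarrow> (nat \<Rightarrow> letter list) \<Rightarrow> bool" where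
  "factorization s U \<longleftrightarrow> (\<forall>k. U k \<noteq> []) \<and>
     (\<forall>k j. j < length (U k) \<longrightarrow> s ((\<Sum>i<k. length (U i)) + j) = U k ! j)"

end

theory Submission
  imports Defs
begin

text \<open>Write \<open>x = s 0\<close>. If some block \<open>U j\<close> of the factorization is followed in \<open>s\<close> by a letter
  other than \<open>x\<close>, then comparing the prefix \<open>U j\<close> with the factor one position further shows that
  \<open>U j\<close> is rich in \<open>x\<close>, hence (by balance) so is every block, i.e. every block has the maximal number
  of \<open>x\<close>'s among factors of its length. Summing over blocks, the prefix \<open>U 0 \<cdots> U (j-1)\<close> has the
  maximal number of \<open>x\<close>'s among factors of its length; but since \<open>U j\<close> is a prefix and the next
  block starts with \<open>x\<close>, reading the prefix of length \<open>|U 0 \<cdots> U j| + 1\<close> in two ways contradicts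
  this. So every block is followed by \<open>s 0\<close>: if \<open>s 0 = a\<close> this is (ii), and if \<open>s 0 = b\<close> every
  block is followed by \<open>b\<close>, so it ends in \<open>a\<close> since \<open>bb\<close> is not a factor.\<close>

definition segment :: "word \<Rightarrow> nat \<Rightarrow> nat \<Rightarrow> letter list" where
  "segment s p n = map s [p..<p + n]"

lemma length_segment [simp]: "length (segment s p n) = n"
  by (simp add: segment_def)

lemma nth_segment [simp]: "i < n \<Longrightarrow> segment s p n ! i = s (p + i)"
  by (simp add: segment_def)

lemma segment_one [simp]: "segment s p (Suc 0) = [s p]"
  by (simp add: segment_def)

lemma segment_add: "segment s p (m + n) = segment s p m @ segment s (p + m) n"
proof -
  have "[p..<p + (m + n)] = [p..<p + m] @ [p + m..<p + m + n]"
    by (metis add.assoc le_add1 upt_add_eq_append)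
  then show ?thesis
    by (simp add: segment_def add.assoc)
qed

lemma segment_Suc: "segment s p (Suc n) = segment s p n @ [s (p + n)]"
  using segment_add [of s p n 1] by simp

lemma factor_segment: "factor (segment s p n) s"
  unfolding factor_def segment_def by auto

lemma prefix_of_iff_segment: "prefix_of w s \<longleftrightarrow> w = segment s 0 (length w)"
  by (simp add: prefix_of_def segment_def)

lemma cnt_append [simp]: "cnt (xs @ ys) x = cnt xs x + cnt ys x"
  by (simp add: cnt_def)

lemma cnt_add_cnt_other:
  assumes "x \<noteq> y"
  shows "cnt w x + cnt w y = length w"
  using assms
proof (induction w)
  case (Cons z w)
  then show ?case
    by (cases x; cases y; cases z; simp add: cnt_def)
qed (simp add: cnt_def)

lemma rich_letter_eqI:
  assumes "balanced s" and "rich_in s w x"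
  shows "rich_letter s w = x"
  unfolding rich_letter_def
proof (rule the_equality)
  fix y
  assume "rich_in s w y"
  then obtain v' where v': "factor v' s" "length v' = length w" "cnt v' y < cnt w y"
    unfolding rich_in_def by blast
  from \<open>rich_in s w x\<close> obtain v where v: "factor v s" "length v = length w" "cnt v x < cnt w x"
    unfolding rich_in_def by blast
  show "y = x"
  proof (rule ccontr)
    assume "y \<noteq> x"
    then have "cnt v' x + cnt v' y = cnt w x + cnt w y"
      using cnt_add_cnt_other v'(2) by metis
    then have "cnt v x + 2 \<le> cnt v' x"
      using v(3) v'(3) by linarith
    moreover have "\<bar>int (cnt v x) - int (cnt v' x)\<bar> \<le> 1"
      using \<open>balanced s\<close> v v' unfolding balanced_def by simp
    ultimately show False
      by linarith
  qed
qed (fact \<open>rich_in s w x\<close>)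

lemma cnt_le_if_rich_letter:
  assumes "balanced s" and "rich_letter s w = x" and "w \<noteq> []" and "factor w s"
    and "factor v s" and "length v = length w"
  shows "cnt v x \<le> cnt w x"
proof (rule ccontr)
  obtain y where "y \<noteq> x"
    using letter.distinct by metis
  assume "\<not> cnt v x \<le> cnt w x"
  then have "cnt v y < cnt w y"
    using cnt_add_cnt_other [OF \<open>y \<noteq> x\<close> [symmetric], of v]
      cnt_add_cnt_other [OF \<open>y \<noteq> x\<close> [symmetric], of w] assms(6) by linarith
  then have "rich_letter s w = y"
    using assms by (intro rich_letter_eqI) (auto simp: rich_in_def)
  then show False
    using \<open>y \<noteq> x\<close> assms(2) by simp
qed

text \<open>Shifting the prefix by one position loses its first letter and gains a different one.\<close>
lemma prefix_rich_in_first_letter: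
  assumes "prefix_of w s" and "w \<noteq> []" and "s (length w) \<noteq> s 0"
  shows "rich_in s w (s 0)"
proof -
  define n where "n = length w - 1"
  have "length w = 1 + n"
    using assms(2) unfolding n_def by simp
  then have "w = segment s 0 (1 + n)"
    using assms(1) unfolding prefix_of_iff_segment by simp
  also have "\<dots> = [s 0] @ segment s 1 n"
    by (simp only: segment_add One_nat_def segment_one add_0)
  finally have w: "w = [s 0] @ segment s 1 n" .
  have shifted: "segment s 1 (length w) = segment s 1 n @ [s (length w)]"
    using assms(2) segment_add [of s 1 n 1] unfolding n_def by simp
  have "cnt (segment s 1 (length w)) (s 0) < cnt w (s 0)"
    using assms(3) by (subst shifted, subst (2) w) (simp add: cnt_def)
  then show ?thesis
    using assms(1,2) factor_segment unfolding rich_in_def prefix_of_iff_segment by (metis length_segment)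
qed

definition block_start :: "(nat \<Rightarrow> letter list) \<Rightarrow> nat \<Rightarrow> nat" where
  "block_start U k = (\<Sum>i<k. length (U i))"

lemma block_start_0 [simp]: "block_start U 0 = 0"
  by (simp add: block_start_def)

lemma block_start_Suc: "block_start U (Suc k) = block_start U k + length (U k)"
  by (simp add: block_start_def)

lemma segment_block_start:
  assumes "factorization s U"
  shows "segment s (block_start U k) (length (U k)) = U k"
  using assms unfolding factorization_def block_start_def by (intro nth_equalityI) auto

lemma block_start_letter:
  assumes "factorization s U" and "prefix_of (U k) s"
  shows "s (block_start U k) = s 0"
proof -
  have "0 < length (U k)"
    using assms(1) unfolding factorization_def by blast
  then have "s (block_start U k) = U k ! 0" and "s 0 = U k ! 0"
    using segment_block_start [OF assms(1), of k] assms(2) nth_segment [of 0 "length (U k)" s]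
    unfolding prefix_of_iff_segment by (metis add_0_right, metis add_0)
  then show ?thesis
    by simp
qed

lemma last_block:
  assumes "factorization s U"
  shows "last (U k) = s (block_start U (Suc k) - 1)"
proof -
  have "U k \<noteq> []"
    using assms unfolding factorization_def by blast
  then have "last (U k) = segment s (block_start U k) (length (U k)) ! (length (U k) - 1)"
    using segment_block_start [OF assms, of k] by (simp add: last_conv_nth)
  also have "\<dots> = s (block_start U (Suc k) - 1)"
    using \<open>U k \<noteq> []\<close> by (cases "U k") (simp_all add: block_start_Suc)
  finally show ?thesis .
qed

lemma cnt_segment_le_block_prefix:
  assumes "factorization s U"
    and max: "\<And>k v. factor v s \<Longrightarrow> length v = length (U k) \<Longrightarrow> cnt v x \<le> cnt (U k) x"
  shows "cnt (segment s p (block_start U k)) x \<le> cnt (segment s 0 (block_start U k)) x"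
proof (induction k)
  case 0
  then show ?case by (simp add: segment_def)
next
  case (Suc k)
  let ?m = "block_start U k" and ?n = "length (U k)"
  have "cnt (segment s p (block_start U (Suc k))) x
      = cnt (segment s p ?m) x + cnt (segment s (p + ?m) ?n) x"
    by (simp add: block_start_Suc segment_add)
  also have "\<dots> \<le> cnt (segment s 0 ?m) x + cnt (U k) x"
    using Suc.IH max [OF factor_segment] by (simp add: add_mono)
  also have "\<dots> = cnt (segment s 0 (block_start U (Suc k))) x"
    using segment_block_start [OF assms(1), of k] by (simp add: block_start_Suc segment_add)
  finally show ?case .
qed

lemma block_followed_by_first_letter:
  assumes "balanced s" and fact: "factorization s U" and prefixes: "\<forall>k. prefix_of (U k) s"
    and same_rich: "\<forall>i j. rich_letter s (U i) = rich_letter s (U j)"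
  shows "s (length (U j)) = s 0"
proof (rule ccontr)
  define x m Q where "x = s 0" and "m = length (U j)" and "Q = block_start U j"
  assume "s (length (U j)) \<noteq> s 0"
  have nonempty: "U k \<noteq> []" for k
    using fact unfolding factorization_def by blast
  have "rich_letter s (U j) = x"
    using rich_letter_eqI prefix_rich_in_first_letter \<open>s (length (U j)) \<noteq> s 0\<close> assms(1) prefixes
      nonempty unfolding x_def by blast
  then have "cnt v x \<le> cnt (U k) x" if "factor v s" "length v = length (U k)" for k v
    using cnt_le_if_rich_letter [OF assms(1) _ nonempty] that same_rich prefixes factor_segment
    unfolding prefix_of_iff_segment by metis
  then have shifted_le: "cnt (segment s (m + 1) Q) x \<le> cnt (segment s 0 Q) x"
    unfolding Q_def using cnt_segment_le_block_prefix [OF fact] by blast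
  have "s (Q + m) = x"
    using block_start_letter [OF fact] prefixes unfolding Q_def m_def x_def
    by (metis block_start_Suc)
  then have "segment s 0 (Q + (m + 1)) = segment s 0 Q @ U j @ [x]"
    using segment_block_start [OF fact, of j] unfolding Q_def m_def
    by (simp add: segment_add segment_Suc)
  moreover have "segment s 0 (m + 1 + Q) = U j @ [s m] @ segment s (m + 1) Q"
    using prefixes segment_add [of s 0 "m + 1" Q] segment_Suc [of s 0 m]
    unfolding m_def prefix_of_iff_segment by simp
  ultimately have "segment s 0 Q @ U j @ [x] = U j @ [s m] @ segment s (m + 1) Q"
    by (simp add: add.commute add.left_commute)
  then have "cnt (segment s 0 Q @ U j @ [x]) x = cnt (U j @ [s m] @ segment s (m + 1) Q) x"
    by (rule arg_cong)
  moreover have "s m \<noteq> x"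
    using \<open>s (length (U j)) \<noteq> s 0\<close> unfolding m_def x_def .
  ultimately have "cnt (segment s 0 Q) x + 1 = cnt (segment s (m + 1) Q) x"
    by (simp add: cnt_def)
  then show False
    using shifted_le by simp
qed

lemma last_block_eq_a:
  assumes "type_a s" and fact: "factorization s U" and prefixes: "\<forall>k. prefix_of (U k) s"
    and "s 0 = b"
  shows "last (U k) = a"
proof (rule ccontr)
  define q where "q = block_start U (Suc k) - 1"
  assume "last (U k) \<noteq> a"
  then have "s q = b"
    using last_block [OF fact] unfolding q_def by (metis letter.exhaust)
  moreover have "Suc q = block_start U (Suc k)"
    using fact unfolding q_def factorization_def block_start_Suc by (simp add: Suc_diff_1)
  then have "s (Suc q) = b"
    using block_start_letter [OF fact] prefixes \<open>s 0 = b\<close> by metis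
  ultimately have "segment s q 2 = [b, b]"
    by (simp add: segment_def upt_rec)
  then show False
    using assms(1) factor_segment unfolding type_a_def by metis
qed

theorem mainTheorem5:
  fixes s :: word and U :: "nat \<Rightarrow> letter list"
  assumes "sturmian s" and "type_a s"
    and "factorization s U"
    and "\<forall>i. prefix_of (U i) s"
    and "\<forall>i j. rich_letter s (U i) = rich_letter s (U j)"
  shows "(\<forall>i. last (U i) = a) \<or> (\<forall>i. prefix_of (U i @ [a]) s)"
proof (cases "s 0")
  case a
  have "balanced s"
    using assms(1) unfolding sturmian_def by blast
  then have "s (length (U i)) = a" for i
    using block_followed_by_first_letter assms(3-5) a by metis
  then have "prefix_of (U i @ [a]) s" for i
    using assms(4) unfolding prefix_of_iff_segment by (simp add: segment_Suc)
  then show ?thesis by blast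
next
  case b
  then show ?thesis
    using last_block_eq_a assms(2-4) by blast
qed

end
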